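(* Let $\mu_Y\in\mathbb{R}$, $\sigma_Y>0$, $n\ge 2$, and let $X_1,\dots,X_n$ be i.i.d. with $X_i\sim LN(\mu_Y,\sigma_Y^2)$. With $A_n=\frac1n\sum_{i=1}^n X_i$, $H_n=n\big/\sum_{i=1}^n (1/X_i)$, $\hat k_n=\frac{n}{n-1}\left(\frac{A_n}{H_n}-1\right)$ and $k=C_v^2=\exp(\sigma_Y^2)-1$, $$\operatorname{Var}(\hat k_n)=\frac{2}{n-1}\,k^2\left(1+k+\frac{k^2}{2n}\right),\qquad \operatorname{sd}(\hat k_n)=k\sqrt{\frac{2}{n-1}\left(1+k+\frac{k^2}{2n}\right)}.$$
   Context: $X\sim LN(\mu_Y,\sigma_Y^2)$ means $\ln X\sim N(\mu_Y,\sigma_Y^2)$. For such $X$, $C_v=\sqrt{\operatorname{Var}(X)}/E[X]$ is the coefficient of variation and $k=E[X]\,E[1/X]-1$; one has $k=C_v^2=\exp(\sigma_Y^2)-1$. $\operatorname{sd}$ denotes the square root of the variance. *)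

theory Defs
  imports "HOL-Probability.Probability"
begin

text \<open>Note: normal_density takes the standard deviation as its second argument.\<close>
definition lognormal_rv :: "'a measure \<Rightarrow> ('a \<Rightarrow> real) \<Rightarrow> real \<Rightarrow> real \<Rightarrow> bool" where
  "lognormal_rv M X m s \<longleftrightarrow>
     X \<in> borel_measurable M \<and> (AE \<omega> in M. X \<omega> > 0) \<and>
     distributed M lborel (\<lambda>\<omega>. ln (X \<omega>)) (normal_density m s)"

end

theory Submission
  imports Defs
begin

text \<open>Write \<open>R = (\<Sum>i. X\<^sub>i) (\<Sum>j. 1 / X\<^sub>j) = \<Sum>i j. X\<^sub>i / X\<^sub>j\<close>; then
the estimator equals \<open>(R - n\<^sup>2) / (n (n - 1))\<close>, so everything reduces to the first two
moments of \<open>R\<close>.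
Each product \<open>X\<^sub>i X\<^sub>j / (X\<^sub>k X\<^sub>l)\<close> is the exponential of an integer combination of the
independent normal variables \<open>ln X\<^sub>t\<close>, so by independence and the normal moment generating
function its mean is \<open>q\<^sup>2 w\<^sub>i\<^sub>j w\<^sub>k\<^sub>l / (w\<^sub>i\<^sub>k w\<^sub>i\<^sub>l w\<^sub>j\<^sub>k w\<^sub>j\<^sub>l)\<close> with \<open>q = exp \<sigma>\<^sup>2\<close> and
\<open>w\<^sub>a\<^sub>b = q\<close> if \<open>a = b\<close>, \<open>1\<close> otherwise. Summing these weights over all index patterns
gives \<open>Var R = n (n - 1) (q - 1)\<^sup>2 ((q - 1)\<^sup>2 + 2 n q)\<close>, and \<open>k = q - 1\<close>.\<close>

lemma normal_density_mult_exp: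
  assumes "s > 0"
  shows "normal_density m s x * exp (c * x)
    = exp (c * m + c\<^sup>2 * s\<^sup>2 / 2) * normal_density (m + c * s\<^sup>2) s x"
proof -
  have "- (x - m)\<^sup>2 / (2 * s\<^sup>2) + c * x
      = c * m + c\<^sup>2 * s\<^sup>2 / 2 + - (x - (m + c * s\<^sup>2))\<^sup>2 / (2 * s\<^sup>2)"
    using assms by (simp add: field_simps power2_eq_square)
  then have "exp (- (x - m)\<^sup>2 / (2 * s\<^sup>2)) * exp (c * x)
      = exp (c * m + c\<^sup>2 * s\<^sup>2 / 2) * exp (- (x - (m + c * s\<^sup>2))\<^sup>2 / (2 * s\<^sup>2))"
    by (simp add: exp_add [symmetric])
  then show ?thesis
    unfolding normal_density_def by (simp add: algebra_simps)
qed

lemma lognormal_rv_exp_moment: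
  assumes "lognormal_rv M X m s" and "s > 0"
  shows "integrable M (\<lambda>\<omega>. exp (c * ln (X \<omega>)))"
    and "(\<integral>\<omega>. exp (c * ln (X \<omega>)) \<partial>M) = exp (c * m + c\<^sup>2 * s\<^sup>2 / 2)"
proof -
  have D: "distributed M lborel (\<lambda>\<omega>. ln (X \<omega>)) (normal_density m s)"
    using assms(1) unfolding lognormal_rv_def by blast
  have shift: "(\<lambda>x. normal_density m s x * exp (c * x))
      = (\<lambda>x. exp (c * m + c\<^sup>2 * s\<^sup>2 / 2) * normal_density (m + c * s\<^sup>2) s x)"
    using normal_density_mult_exp [OF assms(2)] by blast
  have "integrable lborel (\<lambda>x. normal_density m s x * exp (c * x))"
    unfolding shift using assms(2) by simp
  then show "integrable M (\<lambda>\<omega>. exp (c * ln (X \<omega>)))"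
    using distributed_integrable [OF D, of "\<lambda>x. exp (c * x)"] by simp
  have "(\<integral>x. normal_density m s x * exp (c * x) \<partial>lborel) = exp (c * m + c\<^sup>2 * s\<^sup>2 / 2)"
    unfolding shift using assms(2) by simp
  then show "(\<integral>\<omega>. exp (c * ln (X \<omega>)) \<partial>M) = exp (c * m + c\<^sup>2 * s\<^sup>2 / 2)"
    using distributed_integral [OF D, of "\<lambda>x. exp (c * x)"] by simp
qed

lemma (in prob_space) variance_shift_divide:
  fixes X :: "'a \<Rightarrow> real"
  assumes "integrable M X"
  shows "variance (\<lambda>\<omega>. (X \<omega> - a) / b) = variance X / b\<^sup>2"
proof -
  have mean: "expectation (\<lambda>\<omega>. (X \<omega> - a) / b) = (expectation X - a) / b"
    using assms by (simp add: prob_space)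
  have "((X \<omega> - a) / b - (expectation X - a) / b)\<^sup>2 = (X \<omega> - expectation X)\<^sup>2 / b\<^sup>2" for \<omega>
    by (simp add: power_divide diff_divide_distrib [symmetric])
  then show ?thesis
    unfolding mean by simp
qed

lemma sum_of_bool_eq_mult:
  fixes f :: "'b \<Rightarrow> real"
  assumes "finite I" and "a \<in> I"
  shows "(\<Sum>t\<in>I. of_bool (t = a) * f t) = f a"
  using assms by (simp add: Int_absorb1)

lemma indicator_ratio_exponent:
  fixes i j :: 'b
  assumes "finite I" "i \<in> I" "j \<in> I"
  defines "c \<equiv> \<lambda>t. of_bool (t = i) - (of_bool (t = j) :: real)"
  shows "(\<Sum>t\<in>I. c t) = 0"
    and "(\<Sum>t\<in>I. (c t)\<^sup>2) = 2 - 2 * of_bool (i = j)"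
proof -
  show "(\<Sum>t\<in>I. c t) = 0"
    using sum_of_bool_eq_mult [OF assms(1), of _ "\<lambda>_. 1"] assms(2,3) by (simp add: c_def sum_subtractf)
  have "(\<Sum>t\<in>I. (c t)\<^sup>2) = (\<Sum>t\<in>I. of_bool (t = i) * c t - of_bool (t = j) * c t)"
    by (intro sum.cong) (simp_all add: c_def power2_eq_square ring_distribs)
  also have "\<dots> = c i - c j"
    by (simp only: sum_subtractf sum_of_bool_eq_mult [OF assms(1)] assms(2,3))
  finally show "(\<Sum>t\<in>I. (c t)\<^sup>2) = 2 - 2 * of_bool (i = j)"
    by (simp add: c_def eq_commute)
qed

lemma indicator_double_ratio_exponent:
  fixes i j k l :: 'b
  assumes "finite I" "i \<in> I" "j \<in> I" "k \<in> I" "l \<in> I"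
  defines "c \<equiv> \<lambda>t. of_bool (t = i) + of_bool (t = j) - of_bool (t = k) - (of_bool (t = l) :: real)"
  shows "(\<Sum>t\<in>I. c t) = 0"
    and "(\<Sum>t\<in>I. (c t)\<^sup>2) = 4 + 2 * of_bool (i = j) + 2 * of_bool (k = l)
           - 2 * of_bool (i = k) - 2 * of_bool (i = l) - 2 * of_bool (j = k) - 2 * of_bool (j = l)"
proof -
  show "(\<Sum>t\<in>I. c t) = 0"
    using sum_of_bool_eq_mult [OF assms(1), of _ "\<lambda>_. 1"] assms(2-5) by (simp add: c_def sum.distrib sum_subtractf)
  have "(\<Sum>t\<in>I. (c t)\<^sup>2) = (\<Sum>t\<in>I. of_bool (t = i) * c t + of_bool (t = j) * c t
      - of_bool (t = k) * c t - of_bool (t = l) * c t)"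
    by (intro sum.cong) (simp_all add: c_def power2_eq_square ring_distribs)
  also have "\<dots> = c i + c j - c k - c l"
    by (simp only: sum.distrib sum_subtractf sum_of_bool_eq_mult [OF assms(1)] assms(2-5))
  finally show "(\<Sum>t\<in>I. (c t)\<^sup>2) = 4 + 2 * of_bool (i = j) + 2 * of_bool (k = l)
           - 2 * of_bool (i = k) - 2 * of_bool (i = l) - 2 * of_bool (j = k) - 2 * of_bool (j = l)"
    by (simp add: c_def eq_commute)
qed

lemma sum_if_eq_single:
  fixes a b :: real
  assumes "finite I" and "i \<in> I"
  shows "(\<Sum>t\<in>I. if t = i then a else b) = a + (real (card I) - 1) * b"
proof -
  have "(\<Sum>t\<in>I. if t = i then a else b) = (\<Sum>t\<in>I. b + (if t = i then a - b else 0))"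
    by (intro sum.cong) auto
  then show ?thesis
    using assms by (simp add: sum.distrib algebra_simps)
qed

lemma sum_if_eq_pair:
  fixes a b :: real
  assumes "finite I" and "i \<in> I" and "j \<in> I" and "i \<noteq> j"
  shows "(\<Sum>t\<in>I. if t = i \<or> t = j then a else b) = 2 * a + (real (card I) - 2) * b"
proof -
  have "(\<Sum>t\<in>I. if t = i \<or> t = j then a else b)
      = (\<Sum>t\<in>I. b + (if t = i then a - b else 0) + (if t = j then a - b else 0))"
    using assms(4) by (intro sum.cong) auto
  then show ?thesis
    using assms by (simp add: sum.distrib algebra_simps)
qed

definition coincidence :: "real \<Rightarrow> 'b \<Rightarrow> 'b \<Rightarrow> real" where
  "coincidence q a b = (if a = b then q else 1)"

lemma coincidence_exp: "coincidence (exp x) a b = exp (x * of_bool (a = b))"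
  by (simp add: coincidence_def)

lemma sum_sum_coincidence:
  assumes "finite I"
  shows "(\<Sum>k\<in>I. \<Sum>l\<in>I. f k * f l * coincidence q k l)
    = (\<Sum>t\<in>I. f t)\<^sup>2 + (q - 1) * (\<Sum>t\<in>I. (f t)\<^sup>2)"
proof -
  have "(\<Sum>k\<in>I. \<Sum>l\<in>I. f k * f l * coincidence q k l)
      = (\<Sum>k\<in>I. \<Sum>l\<in>I. f k * f l + (if l = k then (q - 1) * (f k)\<^sup>2 else 0))"
    by (intro sum.cong) (auto simp: coincidence_def algebra_simps power2_eq_square)
  also have "\<dots> = (\<Sum>k\<in>I. f k * (\<Sum>l\<in>I. f l) + (q - 1) * (f k)\<^sup>2)"
    using assms by (simp add: sum.distrib sum_distrib_left)
  also have "\<dots> = (\<Sum>t\<in>I. f t)\<^sup>2 + (q - 1) * (\<Sum>t\<in>I. (f t)\<^sup>2)"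
    by (simp add: sum.distrib sum_distrib_left [symmetric] sum_distrib_right [symmetric] power2_eq_square)
  finally show ?thesis .
qed

lemma sum_sum_double_ratio_weight:
  assumes "finite I" and "i \<in> I" and "j \<in> I" and "q > 0"
  defines "n \<equiv> real (card I)"
  shows "(\<Sum>k\<in>I. \<Sum>l\<in>I. q\<^sup>2 * coincidence q i j * coincidence q k l
           / (coincidence q i k * coincidence q i l * coincidence q j k * coincidence q j l))
    = (if i = j then 1 + 2 * (n - 1) * q + (n - 1) * (n - 2) * q ^ 3 + (n - 1) * q ^ 4
       else 2 + (4 * n - 6) * q + (n - 2) * (n - 3) * q\<^sup>2 + (n - 2) * q ^ 3)"
proof -
  define f where "f t = 1 / (coincidence q i t * coincidence q j t)" for t
  have "(\<Sum>k\<in>I. \<Sum>l\<in>I. q\<^sup>2 * coincidence q i j * coincidence q k l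
           / (coincidence q i k * coincidence q i l * coincidence q j k * coincidence q j l))
      = q\<^sup>2 * coincidence q i j * (\<Sum>k\<in>I. \<Sum>l\<in>I. f k * f l * coincidence q k l)"
    unfolding sum_distrib_left
    by (intro sum.cong refl) (simp add: f_def divide_inverse inverse_mult_distrib mult_ac)
  also have "\<dots> = q\<^sup>2 * coincidence q i j * ((\<Sum>t\<in>I. f t)\<^sup>2 + (q - 1) * (\<Sum>t\<in>I. (f t)\<^sup>2))"
    using assms(1) by (simp add: sum_sum_coincidence)
  also have "\<dots> = (if i = j then 1 + 2 * (n - 1) * q + (n - 1) * (n - 2) * q ^ 3 + (n - 1) * q ^ 4
       else 2 + (4 * n - 6) * q + (n - 2) * (n - 3) * q\<^sup>2 + (n - 2) * q ^ 3)"
  proof (cases "i = j")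
    case True
    have "(\<Sum>t\<in>I. f t) = (\<Sum>t\<in>I. if t = i then 1 / q\<^sup>2 else 1)"
      and "(\<Sum>t\<in>I. (f t)\<^sup>2) = (\<Sum>t\<in>I. if t = i then 1 / q ^ 4 else 1)"
      by (auto intro!: sum.cong simp: f_def coincidence_def True power2_eq_square power4_eq_xxxx)
    then have sum_f: "(\<Sum>t\<in>I. f t) = 1 / q\<^sup>2 + (n - 1)"
      and sum_sq_f: "(\<Sum>t\<in>I. (f t)\<^sup>2) = 1 / q ^ 4 + (n - 1)"
      using assms(1,2) by (simp_all add: sum_if_eq_single n_def)
    show ?thesis
      unfolding sum_f sum_sq_f using True assms(4)
      by (simp add: coincidence_def field_simps power2_eq_square power3_eq_cube power4_eq_xxxx)
  next
    case False
    have "(\<Sum>t\<in>I. f t) = (\<Sum>t\<in>I. if t = i \<or> t = j then 1 / q else 1)"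
      and "(\<Sum>t\<in>I. (f t)\<^sup>2) = (\<Sum>t\<in>I. if t = i \<or> t = j then 1 / q\<^sup>2 else 1)"
      using False by (auto intro!: sum.cong simp: f_def coincidence_def power2_eq_square)
    then have sum_f: "(\<Sum>t\<in>I. f t) = 2 / q + (n - 2)"
      and sum_sq_f: "(\<Sum>t\<in>I. (f t)\<^sup>2) = 2 / q\<^sup>2 + (n - 2)"
      using assms(1-3) False by (simp_all add: sum_if_eq_pair n_def)
    show ?thesis
      unfolding sum_f sum_sq_f using False assms(4)
      by (simp add: coincidence_def field_simps power2_eq_square power3_eq_cube)
  qed
  finally show ?thesis .
qed

locale iid_lognormal = prob_space +
  fixes X :: "'i \<Rightarrow> 'a \<Rightarrow> real" and I :: "'i set" and m s :: real
  assumes finite_index: "finite I"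
    and indep: "indep_vars (\<lambda>_. borel) X I"
    and lognormal: "i \<in> I \<Longrightarrow> lognormal_rv M (X i) m s"
    and scale_pos: "s > 0"
begin

lemma measurable_X [measurable]: "i \<in> I \<Longrightarrow> X i \<in> borel_measurable M"
  using lognormal unfolding lognormal_rv_def by blast

lemma AE_pos: "AE \<omega> in M. \<forall>t\<in>I. X t \<omega> > 0"
  using finite_index lognormal by (intro AE_finite_allI) (auto simp: lognormal_rv_def)

lemma expectation_exp_sum_ln:
  fixes c :: "'i \<Rightarrow> real"
  assumes f: "f \<in> borel_measurable M"
    and f_eq: "AE \<omega> in M. f \<omega> = exp (\<Sum>t\<in>I. c t * ln (X t \<omega>))"
  shows "integrable M f"
    and "expectation f = exp (m * (\<Sum>t\<in>I. c t) + s\<^sup>2 / 2 * (\<Sum>t\<in>I. (c t)\<^sup>2))"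
proof -
  define g where "g \<omega> = (\<Prod>t\<in>I. exp (c t * ln (X t \<omega>)))" for \<omega>
  have g_measurable: "g \<in> borel_measurable M"
    unfolding g_def by measurable
  have g_eq_f: "AE \<omega> in M. g \<omega> = f \<omega>"
    using f_eq by eventually_elim (simp add: g_def exp_sum finite_index)
  have indep_factors: "indep_vars (\<lambda>_. borel) (\<lambda>t \<omega>. exp (c t * ln (X t \<omega>))) I"
    by (rule indep_vars_compose2 [OF indep]) simp
  have factor_integrable: "t \<in> I \<Longrightarrow> integrable M (\<lambda>\<omega>. exp (c t * ln (X t \<omega>)))" for t
    using lognormal_rv_exp_moment(1) [OF lognormal scale_pos] by blast
  have g_integrable: "integrable M g"
    unfolding g_def by (rule indep_vars_integrable [OF finite_index indep_factors factor_integrable])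
  have "expectation g = (\<Prod>t\<in>I. expectation (\<lambda>\<omega>. exp (c t * ln (X t \<omega>))))"
    unfolding g_def by (rule indep_vars_lebesgue_integral [OF finite_index indep_factors factor_integrable])
  also have "\<dots> = (\<Prod>t\<in>I. exp (c t * m + (c t)\<^sup>2 * s\<^sup>2 / 2))"
    using lognormal_rv_exp_moment(2) [OF lognormal scale_pos] by (intro prod.cong) auto
  also have "\<dots> = exp (\<Sum>t\<in>I. c t * m + (c t)\<^sup>2 * s\<^sup>2 / 2)"
    by (simp add: exp_sum finite_index)
  also have "(\<Sum>t\<in>I. c t * m + (c t)\<^sup>2 * s\<^sup>2 / 2) = m * (\<Sum>t\<in>I. c t) + s\<^sup>2 / 2 * (\<Sum>t\<in>I. (c t)\<^sup>2)"
    by (simp add: sum.distrib sum_distrib_left algebra_simps)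
  finally have "expectation g = exp (m * (\<Sum>t\<in>I. c t) + s\<^sup>2 / 2 * (\<Sum>t\<in>I. (c t)\<^sup>2))" .
  then show "integrable M f" "expectation f = exp (m * (\<Sum>t\<in>I. c t) + s\<^sup>2 / 2 * (\<Sum>t\<in>I. (c t)\<^sup>2))"
    using integrable_cong_AE_imp [OF g_integrable f g_eq_f] integral_cong_AE [OF g_measurable f g_eq_f]
    by auto
qed

lemma ratio_moment:
  assumes "i \<in> I" and "j \<in> I"
  shows "integrable M (\<lambda>\<omega>. X i \<omega> / X j \<omega>)"
    and "expectation (\<lambda>\<omega>. X i \<omega> / X j \<omega>) = exp (s\<^sup>2) / coincidence (exp (s\<^sup>2)) i j"
proof -
  define c where "c t = of_bool (t = i) - (of_bool (t = j) :: real)" for t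
  have "AE \<omega> in M. X i \<omega> / X j \<omega> = exp (\<Sum>t\<in>I. c t * ln (X t \<omega>))"
    using AE_pos
  proof eventually_elim
    case (elim \<omega>)
    have "(\<Sum>t\<in>I. c t * ln (X t \<omega>)) = ln (X i \<omega>) - ln (X j \<omega>)"
      using finite_index assms by (simp add: c_def left_diff_distrib sum_subtractf Int_absorb1)
    then show ?case
      using elim assms by (simp add: exp_diff)
  qed
  moreover have "m * (\<Sum>t\<in>I. c t) + s\<^sup>2 / 2 * (\<Sum>t\<in>I. (c t)\<^sup>2) = s\<^sup>2 - s\<^sup>2 * of_bool (i = j)"
    unfolding c_def indicator_ratio_exponent [OF finite_index assms] by (simp add: algebra_simps)
  ultimately show "integrable M (\<lambda>\<omega>. X i \<omega> / X j \<omega>)"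
    and "expectation (\<lambda>\<omega>. X i \<omega> / X j \<omega>) = exp (s\<^sup>2) / coincidence (exp (s\<^sup>2)) i j"
    using expectation_exp_sum_ln [of "\<lambda>\<omega>. X i \<omega> / X j \<omega>" c] assms
    by (simp_all add: coincidence_exp exp_diff)
qed

lemma double_ratio_moment:
  assumes "i \<in> I" and "j \<in> I" and "k \<in> I" and "l \<in> I"
  defines "q \<equiv> exp (s\<^sup>2)"
  shows "integrable M (\<lambda>\<omega>. X i \<omega> * X j \<omega> / (X k \<omega> * X l \<omega>))"
    and "expectation (\<lambda>\<omega>. X i \<omega> * X j \<omega> / (X k \<omega> * X l \<omega>))
      = q\<^sup>2 * coincidence q i j * coincidence q k l
        / (coincidence q i k * coincidence q i l * coincidence q j k * coincidence q j l)"
proof -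
  define c where "c t = of_bool (t = i) + of_bool (t = j) - of_bool (t = k) - (of_bool (t = l) :: real)" for t
  have "AE \<omega> in M. X i \<omega> * X j \<omega> / (X k \<omega> * X l \<omega>) = exp (\<Sum>t\<in>I. c t * ln (X t \<omega>))"
    using AE_pos
  proof eventually_elim
    case (elim \<omega>)
    have "(\<Sum>t\<in>I. c t * ln (X t \<omega>)) = ln (X i \<omega>) + ln (X j \<omega>) - ln (X k \<omega>) - ln (X l \<omega>)"
      using finite_index assms
      by (simp add: c_def distrib_right left_diff_distrib sum.distrib sum_subtractf Int_absorb1)
    then show ?case
      using elim assms by (simp add: exp_add exp_diff ln_mult)
  qed
  moreover have "m * (\<Sum>t\<in>I. c t) + s\<^sup>2 / 2 * (\<Sum>t\<in>I. (c t)\<^sup>2)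
      = s\<^sup>2 + s\<^sup>2 + s\<^sup>2 * of_bool (i = j) + s\<^sup>2 * of_bool (k = l) - s\<^sup>2 * of_bool (i = k)
        - s\<^sup>2 * of_bool (i = l) - s\<^sup>2 * of_bool (j = k) - s\<^sup>2 * of_bool (j = l)"
    unfolding c_def indicator_double_ratio_exponent [OF finite_index assms(1-4)] by (simp add: algebra_simps)
  ultimately show "integrable M (\<lambda>\<omega>. X i \<omega> * X j \<omega> / (X k \<omega> * X l \<omega>))"
    and "expectation (\<lambda>\<omega>. X i \<omega> * X j \<omega> / (X k \<omega> * X l \<omega>))
      = q\<^sup>2 * coincidence q i j * coincidence q k l
        / (coincidence q i k * coincidence q i l * coincidence q j k * coincidence q j l)"
    using expectation_exp_sum_ln [of "\<lambda>\<omega>. X i \<omega> * X j \<omega> / (X k \<omega> * X l \<omega>)" c] assms(1-4)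
    by (simp_all add: q_def coincidence_exp exp_add exp_diff exp_double)
qed

definition ratio_sum :: "'a \<Rightarrow> real" where
  "ratio_sum \<omega> = (\<Sum>i\<in>I. \<Sum>j\<in>I. X i \<omega> / X j \<omega>)"

lemma ratio_sum_eq: "ratio_sum \<omega> = (\<Sum>i\<in>I. X i \<omega>) * (\<Sum>j\<in>I. 1 / X j \<omega>)"
  by (simp add: ratio_sum_def sum_product)

lemma ratio_sum_squared:
  "(ratio_sum \<omega>)\<^sup>2 = (\<Sum>i\<in>I. \<Sum>j\<in>I. \<Sum>k\<in>I. \<Sum>l\<in>I. X i \<omega> * X j \<omega> / (X k \<omega> * X l \<omega>))"
proof -
  have "(ratio_sum \<omega>)\<^sup>2 = ((\<Sum>i\<in>I. X i \<omega>) * (\<Sum>j\<in>I. X j \<omega>))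
      * ((\<Sum>k\<in>I. 1 / X k \<omega>) * (\<Sum>l\<in>I. 1 / X l \<omega>))"
    by (simp add: ratio_sum_eq power2_eq_square mult_ac)
  also have "\<dots> = (\<Sum>i\<in>I. \<Sum>j\<in>I. X i \<omega> * X j \<omega>) * (\<Sum>k\<in>I. \<Sum>l\<in>I. 1 / X k \<omega> * (1 / X l \<omega>))"
    by (simp only: sum_product)
  also have "\<dots> = (\<Sum>i\<in>I. \<Sum>j\<in>I. X i \<omega> * X j \<omega> * (\<Sum>k\<in>I. \<Sum>l\<in>I. 1 / X k \<omega> * (1 / X l \<omega>)))"
    by (simp only: sum_distrib_right)
  also have "\<dots> = (\<Sum>i\<in>I. \<Sum>j\<in>I. \<Sum>k\<in>I. \<Sum>l\<in>I. X i \<omega> * X j \<omega> * (1 / X k \<omega> * (1 / X l \<omega>)))"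
    by (simp only: sum_distrib_left)
  finally show ?thesis
    by simp
qed

lemma ratio_sum_integrable: "integrable M ratio_sum"
  unfolding ratio_sum_def [abs_def] using ratio_moment(1) by auto

lemma ratio_sum_squared_integrable: "integrable M (\<lambda>\<omega>. (ratio_sum \<omega>)\<^sup>2)"
  unfolding ratio_sum_squared using double_ratio_moment(1) by auto

lemma expectation_ratio_sum:
  "expectation ratio_sum = real (card I) * (1 + (real (card I) - 1) * exp (s\<^sup>2))"
proof -
  have "expectation ratio_sum = (\<Sum>i\<in>I. \<Sum>j\<in>I. exp (s\<^sup>2) / coincidence (exp (s\<^sup>2)) i j)"
    unfolding ratio_sum_def [abs_def] using ratio_moment by (simp add: Bochner_Integration.integral_sum)
  also have "\<dots> = (\<Sum>i\<in>I. \<Sum>j\<in>I. if j = i then 1 else exp (s\<^sup>2))"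
    by (intro sum.cong refl) (auto simp: coincidence_def)
  also have "\<dots> = (\<Sum>i\<in>I. 1 + (real (card I) - 1) * exp (s\<^sup>2))"
    using finite_index by (intro sum.cong refl sum_if_eq_single)
  finally show ?thesis
    by simp
qed

lemma expectation_ratio_sum_squared:
  defines "n \<equiv> real (card I)" and "q \<equiv> exp (s\<^sup>2)"
  shows "expectation (\<lambda>\<omega>. (ratio_sum \<omega>)\<^sup>2)
    = n * (1 + 2 * (n - 1) * q + (n - 1) * (n - 2) * q ^ 3 + (n - 1) * q ^ 4)
      + n * (n - 1) * (2 + (4 * n - 6) * q + (n - 2) * (n - 3) * q\<^sup>2 + (n - 2) * q ^ 3)"
    (is "_ = ?rhs")
proof -
  have "expectation (\<lambda>\<omega>. (ratio_sum \<omega>)\<^sup>2) = (\<Sum>i\<in>I. \<Sum>j\<in>I. \<Sum>k\<in>I. \<Sum>l\<in>I.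
      q\<^sup>2 * coincidence q i j * coincidence q k l
      / (coincidence q i k * coincidence q i l * coincidence q j k * coincidence q j l))"
    unfolding ratio_sum_squared q_def using double_ratio_moment
    by (simp add: Bochner_Integration.integral_sum)
  also have "\<dots> = (\<Sum>i\<in>I. \<Sum>j\<in>I. if j = i
      then 1 + 2 * (n - 1) * q + (n - 1) * (n - 2) * q ^ 3 + (n - 1) * q ^ 4
      else 2 + (4 * n - 6) * q + (n - 2) * (n - 3) * q\<^sup>2 + (n - 2) * q ^ 3)"
    using finite_index by (intro sum.cong refl) (simp add: sum_sum_double_ratio_weight q_def n_def eq_commute)
  also have "\<dots> = ?rhs"
    using finite_index by (simp add: sum_if_eq_single n_def algebra_simps)
  finally show ?thesis .
qed

lemma variance_ratio_sum:
  defines "n \<equiv> real (card I)" and "q \<equiv> exp (s\<^sup>2)"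
  shows "variance ratio_sum = n * (n - 1) * (q - 1)\<^sup>2 * ((q - 1)\<^sup>2 + 2 * n * q)"
proof -
  have "variance ratio_sum = expectation (\<lambda>\<omega>. (ratio_sum \<omega>)\<^sup>2) - (expectation ratio_sum)\<^sup>2"
    by (rule variance_eq [OF ratio_sum_integrable ratio_sum_squared_integrable])
  also have "\<dots> = n * (n - 1) * (q - 1)\<^sup>2 * ((q - 1)\<^sup>2 + 2 * n * q)"
    unfolding expectation_ratio_sum expectation_ratio_sum_squared n_def [symmetric] q_def [symmetric]
    by (simp add: algebra_simps power2_eq_square power3_eq_cube power4_eq_xxxx)
  finally show ?thesis .
qed

lemma variance_ratio_estimator:
  assumes "card I \<ge> 2"
  defines "n \<equiv> real (card I)" and "k \<equiv> exp (s\<^sup>2) - 1"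
  shows "variance (\<lambda>\<omega>. (ratio_sum \<omega> - n\<^sup>2) / (n * (n - 1)))
    = 2 / (n - 1) * k\<^sup>2 * (1 + k + k\<^sup>2 / (2 * n))"
proof -
  have "n > 1"
    using assms(1) by (simp add: n_def)
  have "variance (\<lambda>\<omega>. (ratio_sum \<omega> - n\<^sup>2) / (n * (n - 1))) = variance ratio_sum / (n * (n - 1))\<^sup>2"
    by (rule variance_shift_divide [OF ratio_sum_integrable])
  also have "\<dots> = n * (n - 1) * k\<^sup>2 * (k\<^sup>2 + 2 * n * (k + 1)) / (n * (n - 1))\<^sup>2"
    unfolding variance_ratio_sum n_def k_def by simp
  also have "\<dots> = k\<^sup>2 * (k\<^sup>2 + 2 * n * (k + 1)) / (n * (n - 1))"
    using \<open>n > 1\<close> by (simp add: power2_eq_square)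
  also have "\<dots> = 2 / (n - 1) * k\<^sup>2 * (1 + k + k\<^sup>2 / (2 * n))"
    using \<open>n > 1\<close> by (simp add: field_simps)
  finally show ?thesis .
qed

end

lemma ratio_estimator_eq:
  fixes n S T :: real
  assumes "n > 1"
  shows "n / (n - 1) * ((S / n) / (n / T) - 1) = (S * T - n\<^sup>2) / (n * (n - 1))"
  using assms by (simp add: field_simps power2_eq_square)

theorem proposition4:
  fixes M :: "'a measure" and X :: "nat \<Rightarrow> 'a \<Rightarrow> real"
    and mY sY :: real and n :: nat
  assumes "prob_space M"
    and "sY > 0" and "n \<ge> 2"
    and "prob_space.indep_vars M (\<lambda>_. borel) X {1..n}"
    and "\<And>i. i \<in> {1..n} \<Longrightarrow> lognormal_rv M (X i) mY sY"
  defines "khat \<equiv> (\<lambda>\<omega>. real n / (real n - 1) *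
               (((\<Sum>i=1..n. X i \<omega>) / real n) / (real n / (\<Sum>i=1..n. 1 / X i \<omega>)) - 1))"
    and "k \<equiv> exp (sY\<^sup>2) - 1"
  shows "prob_space.variance M khat
           = 2 / (real n - 1) * k\<^sup>2 * (1 + k + k\<^sup>2 / (2 * real n))
     \<and> sqrt (prob_space.variance M khat)
           = k * sqrt (2 / (real n - 1) * (1 + k + k\<^sup>2 / (2 * real n)))"
proof -
  have "iid_lognormal M X {1..n} mY sY"
    using assms(1,2,4,5) by (simp add: iid_lognormal_def iid_lognormal_axioms_def)
  then interpret iid_lognormal M X "{1..n}" mY sY .
  have "real n > 1"
    using assms(3) by simp
  then have "khat = (\<lambda>\<omega>. (ratio_sum \<omega> - (real n)\<^sup>2) / (real n * (real n - 1)))"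
    unfolding khat_def ratio_sum_eq by (intro ext ratio_estimator_eq)
  then have variance: "variance khat = 2 / (real n - 1) * k\<^sup>2 * (1 + k + k\<^sup>2 / (2 * real n))"
    using variance_ratio_estimator assms(3) by (simp add: k_def)
  have "k > 0"
    using assms(2) by (simp add: k_def)
  have "sqrt (variance khat) = sqrt (k\<^sup>2) * sqrt (2 / (real n - 1) * (1 + k + k\<^sup>2 / (2 * real n)))"
    unfolding variance real_sqrt_mult [symmetric] by (simp add: ac_simps)
  also have "sqrt (k\<^sup>2) = k"
    using \<open>k > 0\<close> by simp
  finally have "sqrt (variance khat) = k * sqrt (2 / (real n - 1) * (1 + k + k\<^sup>2 / (2 * real n)))" .
  with variance show ?thesis
    by simp
qed

end
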